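(* Let $\lambda$ be a well-behaved hypergraph width measure, $k$ an integer, $H$ a hypergraph with $\lambda\text{-}tw(H)\le k$, and $W\subseteq V(H)$. Then there exists a set $S\subseteq V(H)$ with $\lambda_H(S)\le k$ such that for every connected component $C$ of $\underline{H}\setminus S$ (viewed as a vertex set) we have $\lambda_H(W\cap C)\le\lambda_H(W)/2$.
   Context: A hypergraph $H$ has finite vertex set $V(H)$ and edge set $E(H)$ of subsets of $V(H)$; $||H||$ is the size of its encoding. The Gaifman graph $\underline{H}$ is the graph on $V(H)$ with two distinct vertices adjacent iff they lie in a common edge; $\underline{H}\setminus S$ is the graph obtained by deleting the vertices of $S$. A tree decomposition of $H$ is a tree $T$ with bags $B_t\subseteq V(H)$ such that nodes containing a given vertex form a connected subtree and every edge of $\underline{H}$ is inside some bag. A width measure $\lambda$ assigns to each hypergraph $H$ a real function $\lambda_H$ on subsets of $V(H)$; $\lambda\text{-}tw(H)$ is the minimum over tree decompositions of $\max_t\lambda_H(B_t)$. $\lambda$ is well-behaved if: (1) $\lambda_H(\{x\})\ge1$; (2) $\lambda_H(S\cup T)\le\lambda_H(S)+\lambda_H(T)$; (3) equality in (2) for disjoint $S,T$ with no edge of $\underline{H}$ between them; (4) $\lambda_F(S)\le\lambda_H(T)$ whenever $V(H)\subseteq V(F)$, $E(H)\subseteq E(F)$ and $S\subseteq T$; (5) $\lambda_H(S)\le k$ is decidable in time $||H||^{O(k)}$. *)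

theory Defs
  imports Complex_Main
begin

definition hypergraph :: "'a set \<Rightarrow> 'a set set \<Rightarrow> bool" where
  "hypergraph V E \<longleftrightarrow> finite V \<and> (\<forall>e\<in>E. e \<subseteq> V)"

definition gaifman_adj :: "'a set set \<Rightarrow> 'a \<Rightarrow> 'a \<Rightarrow> bool" where
  "gaifman_adj E u v \<longleftrightarrow> u \<noteq> v \<and> (\<exists>e\<in>E. u \<in> e \<and> v \<in> e)"

definition gaifman_components :: "'a set \<Rightarrow> 'a set set \<Rightarrow> 'a set \<Rightarrow> 'a set set" where
  "gaifman_components V E S =
     (let R = {(u, v). u \<in> V - S \<and> v \<in> V - S \<and> gaifman_adj E u v}
      in (\<lambda>u. {v \<in> V - S. (u, v) \<in> R\<^sup>*}) ` (V - S))"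

text \<open>A finite (nonempty) tree on node set N with symmetric edge relation ET:
  connected, and every edge is a bridge (i.e. acyclic).\<close>
definition is_tree :: "nat set \<Rightarrow> (nat \<times> nat) set \<Rightarrow> bool" where
  "is_tree N ET \<longleftrightarrow> finite N \<and> N \<noteq> {} \<and> ET \<subseteq> N \<times> N \<and> sym ET \<and> irrefl ET \<and>
     (\<forall>s\<in>N. \<forall>t\<in>N. (s, t) \<in> ET\<^sup>*) \<and>
     (\<forall>(s, t)\<in>ET. (s, t) \<notin> (ET - {(s, t), (t, s)})\<^sup>*)"

definition tree_decomposition ::
  "'a set \<Rightarrow> 'a set set \<Rightarrow> nat set \<Rightarrow> (nat \<times> nat) set \<Rightarrow> (nat \<Rightarrow> 'a set) \<Rightarrow> bool" where
  "tree_decomposition V E N ET B \<longleftrightarrow>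
     is_tree N ET \<and> (\<forall>t\<in>N. B t \<subseteq> V) \<and>
     (\<forall>x\<in>V. \<exists>t\<in>N. x \<in> B t) \<and>
     (\<forall>x\<in>V. let Nx = {t \<in> N. x \<in> B t} in
        \<forall>s\<in>Nx. \<forall>t\<in>Nx. (s, t) \<in> (ET \<inter> (Nx \<times> Nx))\<^sup>*) \<and>
     (\<forall>u\<in>V. \<forall>v\<in>V. gaifman_adj E u v \<longrightarrow> (\<exists>t\<in>N. u \<in> B t \<and> v \<in> B t))"

text \<open>A width measure: lam V E S is the value lambda_H(S) for H = (V,E).\<close>
type_synonym 'a width_measure = "'a set \<Rightarrow> 'a set set \<Rightarrow> 'a set \<Rightarrow> real"

definition lambda_tw :: "'a width_measure \<Rightarrow> 'a set \<Rightarrow> 'a set set \<Rightarrow> real" where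
  "lambda_tw lam V E =
     Inf {w. \<exists>N ET B. tree_decomposition V E N ET B \<and> w = Max ((\<lambda>t. lam V E (B t)) ` N)}"

text \<open>Well-behavedness, conditions (1)-(4). Condition (5) (algorithmic decidability
  in time ||H||^O(k)) is not formalized.\<close>
definition well_behaved :: "'a width_measure \<Rightarrow> bool" where
  "well_behaved lam \<longleftrightarrow>
     (\<forall>V E. hypergraph V E \<longrightarrow>
        (\<forall>x\<in>V. lam V E {x} \<ge> 1) \<and>
        (\<forall>S T. S \<subseteq> V \<longrightarrow> T \<subseteq> V \<longrightarrow> lam V E (S \<union> T) \<le> lam V E S + lam V E T) \<and>
        (\<forall>S T. S \<subseteq> V \<longrightarrow> T \<subseteq> V \<longrightarrow> S \<inter> T = {} \<longrightarrow>
            (\<forall>u\<in>S. \<forall>v\<in>T. \<not> gaifman_adj E u v) \<longrightarrow>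
            lam V E (S \<union> T) = lam V E S + lam V E T)) \<and>
     (\<forall>VH EH VF EF S T. hypergraph VH EH \<longrightarrow> hypergraph VF EF \<longrightarrow>
        VH \<subseteq> VF \<longrightarrow> EH \<subseteq> EF \<longrightarrow> S \<subseteq> T \<longrightarrow> T \<subseteq> VH \<longrightarrow>
        lam VF EF S \<le> lam VH EH T)"

end

theory Submission
  imports Defs
begin

text \<open>Take a tree decomposition of width at most k. If some bag S is unbalanced, the
  component C of the Gaifman graph minus S carrying more than half of W lives entirely
  in one branch of the tree at that node, so "point" from the node to the neighbour
  heading that branch. If no bag were balanced, every node would point to a neighbour,
  and in a finite tree two adjacent nodes must then point at each other. Their heavy
  components lie on opposite sides of the edge, hence are disjoint and non-adjacent,
  and by additivity and monotonicity of the width measure their W-parts would weigh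
  more than W itself.\<close>

definition branch :: "nat set \<Rightarrow> (nat \<times> nat) set \<Rightarrow> nat \<Rightarrow> nat \<Rightarrow> nat set" where
  "branch N ET t s = {x \<in> N. (s, x) \<in> (ET - {(s, t), (t, s)})\<^sup>*}"

lemma is_treeD:
  assumes "is_tree N ET"
  shows "finite N" "N \<noteq> {}" "ET \<subseteq> N \<times> N" "sym ET" "irrefl ET"
    "\<And>s t. s \<in> N \<Longrightarrow> t \<in> N \<Longrightarrow> (s, t) \<in> ET\<^sup>*"
    "\<And>s t. (s, t) \<in> ET \<Longrightarrow> (s, t) \<notin> (ET - {(s, t), (t, s)})\<^sup>*"
  using assms unfolding is_tree_def by auto

lemma finite_branch: "is_tree N ET \<Longrightarrow> finite (branch N ET t s)"
  using is_treeD(1) unfolding branch_def by auto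

lemma tree_edge_bridge:
  assumes "is_tree N ET" "(t, s) \<in> ET"
  shows "(s, t) \<notin> (ET - {(s, t), (t, s)})\<^sup>*" "(t, s) \<notin> (ET - {(s, t), (t, s)})\<^sup>*"
proof -
  have sym: "sym (ET - {(s, t), (t, s)})"
    using is_treeD(4)[OF assms(1)] unfolding sym_def by auto
  show t_s: "(t, s) \<notin> (ET - {(s, t), (t, s)})\<^sup>*"
    using is_treeD(7)[OF assms] by (simp add: insert_commute)
  show "(s, t) \<notin> (ET - {(s, t), (t, s)})\<^sup>*"
    using t_s sym by (metis sym_rtrancl symD)
qed

lemma branch_memI:
  "x \<in> N \<Longrightarrow> (s, x) \<in> (ET - {(s, t), (t, s)})\<^sup>* \<Longrightarrow> x \<in> branch N ET t s"
  unfolding branch_def by blast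

lemma root_in_branch: "is_tree N ET \<Longrightarrow> (t, s) \<in> ET \<Longrightarrow> s \<in> branch N ET t s"
  using is_treeD(3) unfolding branch_def by blast

lemma not_in_own_branch: "is_tree N ET \<Longrightarrow> (t, s) \<in> ET \<Longrightarrow> t \<notin> branch N ET t s"
  using tree_edge_bridge(1) unfolding branch_def by blast

lemma branches_disjoint:
  assumes "is_tree N ET" "(t, s) \<in> ET"
  shows "branch N ET t s \<inter> branch N ET s t = {}"
proof (rule ccontr)
  let ?R = "ET - {(s, t), (t, s)}"
  assume "branch N ET t s \<inter> branch N ET s t \<noteq> {}"
  then obtain x where "(s, x) \<in> ?R\<^sup>*" "(t, x) \<in> ?R\<^sup>*"
    unfolding branch_def by (auto simp: insert_commute)
  moreover have "sym ?R" using is_treeD(4)[OF assms(1)] unfolding sym_def by auto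
  ultimately have "(s, t) \<in> ?R\<^sup>*" by (metis rtrancl_trans sym_rtrancl symD)
  with tree_edge_bridge(1)[OF assms] show False by blast
qed

lemma branches_cover:
  assumes "is_tree N ET" "t \<in> N" "x \<in> N" "x \<noteq> t"
  shows "\<exists>s. (t, s) \<in> ET \<and> x \<in> branch N ET t s"
proof -
  have "(t, x) \<in> ET\<^sup>*" using is_treeD(6)[OF assms(1)] assms(2,3) .
  then have "x = t \<or> (\<exists>s. (t, s) \<in> ET \<and> x \<in> branch N ET t s)"
  proof (induction rule: rtrancl_induct)
    case base then show ?case by simp
  next
    case (step y z)
    have zN: "z \<in> N" using step(2) is_treeD(3)[OF assms(1)] by blast
    from step(3) show ?case
    proof
      assume "y = t"
      then show ?thesis using step(2) zN by (blast intro: branch_memI)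
    next
      assume "\<exists>s. (t, s) \<in> ET \<and> y \<in> branch N ET t s"
      then obtain s where s: "(t, s) \<in> ET" "y \<in> branch N ET t s" by blast
      have "y \<noteq> t" using not_in_own_branch[OF assms(1) s(1)] s(2) by blast
      show ?thesis
      proof (cases "z = t")
        case False
        with \<open>y \<noteq> t\<close> have "(y, z) \<in> ET - {(s, t), (t, s)}" using step(2) by blast
        with s(2) have "(s, z) \<in> (ET - {(s, t), (t, s)})\<^sup>*"
          unfolding branch_def by (blast intro: rtrancl_into_rtrancl)
        then show ?thesis using s(1) zN by (blast intro: branch_memI)
      qed simp
    qed
  qed
  then show ?thesis using assms(4) by blast
qed

lemma branch_psubset:
  assumes "is_tree N ET" "(t, s) \<in> ET" "(s, r) \<in> ET" "r \<noteq> t"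
  shows "branch N ET s r \<subset> branch N ET t s"
proof -
  have "s \<noteq> t" using is_treeD(5)[OF assms(1)] assms(2) unfolding irrefl_def by blast
  have r_s: "(r, s) \<notin> (ET - {(r, s), (s, r)})\<^sup>*" using tree_edge_bridge(1)[OF assms(1,3)] .
  have "branch N ET s r \<subseteq> branch N ET t s"
  proof
    fix x assume "x \<in> branch N ET s r"
    then have x: "x \<in> N" "(r, x) \<in> (ET - {(r, s), (s, r)})\<^sup>*" unfolding branch_def by auto
    \<comment> \<open>a path from r avoiding the edge (s, r) never visits s, so it avoids (t, s) as well\<close>
    from x(2) have "(r, x) \<in> (ET - {(s, t), (t, s)})\<^sup>*"
    proof (induction rule: rtrancl_induct)
      case (step y z)
      have "y \<noteq> s" "z \<noteq> s" using step(1,2) r_s by (auto intro: rtrancl_into_rtrancl)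
      then show ?case using step by (blast intro: rtrancl_into_rtrancl)
    qed simp
    moreover have "(s, r) \<in> ET - {(s, t), (t, s)}" using assms(3,4) \<open>s \<noteq> t\<close> by blast
    ultimately show "x \<in> branch N ET t s"
      using x(1) by (blast intro: branch_memI converse_rtrancl_into_rtrancl)
  qed
  then show ?thesis
    using not_in_own_branch[OF assms(1,3)] root_in_branch[OF assms(1,2)] by blast
qed

text \<open>Following the branches, the walk t, f t, f (f t), \<dots> gets trapped: the node whose
  branch towards f is smallest must be pointed back at.\<close>

lemma tree_choice_mutual_neighbours:
  assumes tree: "is_tree N ET" and f: "\<forall>t\<in>N. (t, f t) \<in> ET"
  shows "\<exists>t\<in>N. f (f t) = t"
proof -
  obtain t0 where "t0 \<in> N" using is_treeD(2)[OF tree] by blast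
  then obtain t where t: "t \<in> N"
    and least: "\<And>u. u \<in> N \<Longrightarrow> card (branch N ET t (f t)) \<le> card (branch N ET u (f u))"
    using ex_has_least_nat[of "\<lambda>u. u \<in> N" t0 "\<lambda>u. card (branch N ET u (f u))"] by blast
  have ft: "f t \<in> N" using f t is_treeD(3)[OF tree] by blast
  show ?thesis
  proof (rule ccontr)
    assume "\<not> ?thesis"
    then have "branch N ET (f t) (f (f t)) \<subset> branch N ET t (f t)"
      using branch_psubset[OF tree] f t ft by blast
    then have "card (branch N ET (f t) (f (f t))) < card (branch N ET t (f t))"
      by (rule psubset_card_mono[OF finite_branch[OF tree]])
    with least[OF ft] show False by linarith
  qed
qed

lemma tree_decomposition_is_tree: "tree_decomposition V E N ET B \<Longrightarrow> is_tree N ET"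
  unfolding tree_decomposition_def by blast

lemma tree_decomposition_bag_subset: "tree_decomposition V E N ET B \<Longrightarrow> t \<in> N \<Longrightarrow> B t \<subseteq> V"
  unfolding tree_decomposition_def by blast

lemma tree_decomposition_covers_vertex:
  "tree_decomposition V E N ET B \<Longrightarrow> x \<in> V \<Longrightarrow> \<exists>t\<in>N. x \<in> B t"
  unfolding tree_decomposition_def by blast

lemma tree_decomposition_covers_adj:
  "tree_decomposition V E N ET B \<Longrightarrow> u \<in> V \<Longrightarrow> v \<in> V \<Longrightarrow> gaifman_adj E u v \<Longrightarrow>
    \<exists>t\<in>N. u \<in> B t \<and> v \<in> B t"
  unfolding tree_decomposition_def by blast

lemma tree_decomposition_connected:
  assumes "tree_decomposition V E N ET B" "x \<in> V" "s \<in> N" "t \<in> N" "x \<in> B s" "x \<in> B t"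
  shows "(s, t) \<in> (ET \<inter> ({z \<in> N. x \<in> B z} \<times> {z \<in> N. x \<in> B z}))\<^sup>*"
  using assms unfolding tree_decomposition_def Let_def by blast

lemma vertex_outside_bag_in_one_branch:
  assumes td: "tree_decomposition V E N ET B" and "c \<in> V" "c \<notin> B t" "(t, s) \<in> ET"
    and y: "y \<in> branch N ET t s" "c \<in> B y" and z: "z \<in> N" "c \<in> B z"
  shows "z \<in> branch N ET t s"
proof -
  have tree: "is_tree N ET" using tree_decomposition_is_tree[OF td] .
  have "y \<in> N" using y(1) unfolding branch_def by blast
  then have "(y, z) \<in> (ET \<inter> ({z \<in> N. c \<in> B z} \<times> {z \<in> N. c \<in> B z}))\<^sup>*"
    by (rule tree_decomposition_connected[OF td \<open>c \<in> V\<close> _ z(1) y(2) z(2)])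
  then show ?thesis
  proof (induction rule: rtrancl_induct)
    case base then show ?case using y(1) .
  next
    case (step a b)
    have "a \<noteq> t" using not_in_own_branch[OF tree \<open>(t, s) \<in> ET\<close>] step(3) by blast
    moreover have "b \<noteq> t" using step(2) \<open>c \<notin> B t\<close> by blast
    ultimately have "(a, b) \<in> ET - {(s, t), (t, s)}" using step(2) by blast
    with step(3) have "(s, b) \<in> (ET - {(s, t), (t, s)})\<^sup>*"
      unfolding branch_def by (blast intro: rtrancl_into_rtrancl)
    then show ?case using step(2) by (blast intro: branch_memI)
  qed
qed

lemma gaifman_componentE:
  assumes "C \<in> gaifman_components V E S"
  obtains u where "u \<in> C" "C \<subseteq> V - S"
    "\<forall>c\<in>C. (u, c) \<in> {(u, v). u \<in> V - S \<and> v \<in> V - S \<and> gaifman_adj E u v}\<^sup>*"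
  using assms unfolding gaifman_components_def Let_def by auto

definition confined_to :: "nat set \<Rightarrow> (nat \<Rightarrow> 'a set) \<Rightarrow> 'a set \<Rightarrow> nat set \<Rightarrow> bool" where
  "confined_to N B C X \<longleftrightarrow> (\<forall>c\<in>C. \<forall>z\<in>N. c \<in> B z \<longrightarrow> z \<in> X)"

lemma component_confined_to_branch:
  assumes td: "tree_decomposition V E N ET B" and C: "C \<in> gaifman_components V E (B t)"
    and t: "t \<in> N"
  obtains s where "(t, s) \<in> ET" "confined_to N B C (branch N ET t s)"
proof -
  let ?R = "{(u, v). u \<in> V - B t \<and> v \<in> V - B t \<and> gaifman_adj E u v}"
  obtain u where u: "u \<in> C" "C \<subseteq> V - B t" "\<forall>c\<in>C. (u, c) \<in> ?R\<^sup>*"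
    using gaifman_componentE[OF C] by blast
  obtain y where y: "y \<in> N" "u \<in> B y" using tree_decomposition_covers_vertex[OF td] u by blast
  then have "y \<noteq> t" using u by blast
  then obtain s where s: "(t, s) \<in> ET" "y \<in> branch N ET t s"
    using branches_cover[OF tree_decomposition_is_tree[OF td] t y(1)] by blast
  let ?in_branch = "\<lambda>c. \<forall>z\<in>N. c \<in> B z \<longrightarrow> z \<in> branch N ET t s"
  have "?in_branch u" using vertex_outside_bag_in_one_branch[OF td _ _ s(1) s(2) y(2)] u by blast
  \<comment> \<open>adjacent vertices share a bag, so the property spreads along the component\<close>
  have "?in_branch c" if "(u, c) \<in> ?R\<^sup>*" for c
    using that
  proof (induction rule: rtrancl_induct)
    case (step a b)
    then obtain z where "z \<in> N" "a \<in> B z" "b \<in> B z"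
      using tree_decomposition_covers_adj[OF td] by blast
    with step show ?case using vertex_outside_bag_in_one_branch[OF td _ _ s(1)] by blast
  qed (rule \<open>?in_branch u\<close>)
  then show thesis using that s(1) u(3) unfolding confined_to_def by blast
qed

lemma components_across_edge_separated:
  assumes td: "tree_decomposition V E N ET B" and ts: "(t, s) \<in> ET"
    and C: "C \<in> gaifman_components V E (B t)" "confined_to N B C (branch N ET t s)"
    and D: "D \<in> gaifman_components V E (B s)" "confined_to N B D (branch N ET s t)"
  shows "C \<inter> D = {}" "\<forall>u\<in>C. \<forall>v\<in>D. \<not> gaifman_adj E u v"
proof -
  have disj: "branch N ET t s \<inter> branch N ET s t = {}"
    using branches_disjoint[OF tree_decomposition_is_tree[OF td] ts] .
  have CV: "C \<subseteq> V" and DV: "D \<subseteq> V" using gaifman_componentE C(1) D(1) by blast+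
  show "C \<inter> D = {}"
  proof (rule ccontr)
    assume "C \<inter> D \<noteq> {}"
    then obtain c where "c \<in> C" "c \<in> D" by blast
    moreover obtain z where "z \<in> N" "c \<in> B z"
      using tree_decomposition_covers_vertex[OF td] \<open>c \<in> C\<close> CV by blast
    ultimately show False using C(2) D(2) disj unfolding confined_to_def by blast
  qed
  show "\<forall>u\<in>C. \<forall>v\<in>D. \<not> gaifman_adj E u v"
  proof (intro ballI notI)
    fix u v assume "u \<in> C" "v \<in> D" "gaifman_adj E u v"
    moreover obtain z where "z \<in> N" "u \<in> B z" "v \<in> B z"
      using tree_decomposition_covers_adj[OF td] calculation CV DV by blast
    ultimately show False using C(2) D(2) disj unfolding confined_to_def by blast
  qed
qed

lemma well_behaved_additive:
  assumes "well_behaved lam" "hypergraph V E" "S \<subseteq> V" "T \<subseteq> V" "S \<inter> T = {}"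
    "\<forall>u\<in>S. \<forall>v\<in>T. \<not> gaifman_adj E u v"
  shows "lam V E (S \<union> T) = lam V E S + lam V E T"
proof -
  have "\<forall>S T. S \<subseteq> V \<longrightarrow> T \<subseteq> V \<longrightarrow> S \<inter> T = {} \<longrightarrow>
      (\<forall>u\<in>S. \<forall>v\<in>T. \<not> gaifman_adj E u v) \<longrightarrow> lam V E (S \<union> T) = lam V E S + lam V E T"
    using assms(1,2) unfolding well_behaved_def by blast
  then show ?thesis using assms(3-6) by blast
qed

lemma well_behaved_mono:
  assumes "well_behaved lam" "hypergraph V E" "S \<subseteq> T" "T \<subseteq> V"
  shows "lam V E S \<le> lam V E T"
proof -
  have "\<forall>VH EH VF EF S T. hypergraph VH EH \<longrightarrow> hypergraph VF EF \<longrightarrow>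
      VH \<subseteq> VF \<longrightarrow> EH \<subseteq> EF \<longrightarrow> S \<subseteq> T \<longrightarrow> T \<subseteq> VH \<longrightarrow> lam VF EF S \<le> lam VH EH T"
    using assms(1) unfolding well_behaved_def by (elim conjE)
  then show ?thesis using assms(2-4) by blast
qed

lemma separated_parts_weight:
  assumes "well_behaved lam" "hypergraph V E" "W \<subseteq> V" "C \<inter> D = {}"
    "\<forall>u\<in>C. \<forall>v\<in>D. \<not> gaifman_adj E u v"
  shows "lam V E (W \<inter> C) + lam V E (W \<inter> D) \<le> lam V E W"
proof -
  have "lam V E (W \<inter> C) + lam V E (W \<inter> D) = lam V E ((W \<inter> C) \<union> (W \<inter> D))"
  proof (rule well_behaved_additive[OF assms(1,2), symmetric])
    show "W \<inter> C \<subseteq> V" "W \<inter> D \<subseteq> V" "W \<inter> C \<inter> (W \<inter> D) = {}"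
      using assms(3,4) by blast+
    show "\<forall>u\<in>W \<inter> C. \<forall>v\<in>W \<inter> D. \<not> gaifman_adj E u v" using assms(5) by blast
  qed
  also have "\<dots> \<le> lam V E W"
    by (rule well_behaved_mono[OF assms(1,2) _ assms(3)]) blast
  finally show ?thesis .
qed

text \<open>The infimum in the definition of lambda_tw ranges over values of lam on subsets of
  the finite set V, so it is attained.\<close>

lemma lambda_tw_attained:
  assumes "hypergraph V E" "lambda_tw lam V E \<le> w"
  obtains N ET B where "tree_decomposition V E N ET B" "\<forall>t\<in>N. lam V E (B t) \<le> w"
proof -
  define A where "A = {w. \<exists>N ET B. tree_decomposition V E N ET B \<and> w = Max ((\<lambda>t. lam V E (B t)) ` N)}"
  have "A \<subseteq> lam V E ` Pow V"
  proof
    fix w assume "w \<in> A"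
    then obtain N ET B where td: "tree_decomposition V E N ET B"
      and w: "w = Max ((\<lambda>t. lam V E (B t)) ` N)" unfolding A_def by blast
    have "finite N" "N \<noteq> {}" using is_treeD(1,2)[OF tree_decomposition_is_tree[OF td]] .
    then have "w \<in> (\<lambda>t. lam V E (B t)) ` N" using w Max_in by blast
    then show "w \<in> lam V E ` Pow V" using tree_decomposition_bag_subset[OF td] by blast
  qed
  moreover have "finite V" using assms(1) unfolding hypergraph_def by blast
  ultimately have finA: "finite A" using finite_subset by blast
  have "tree_decomposition V E {0} {} (\<lambda>_. V)"
    unfolding tree_decomposition_def is_tree_def Let_def by (auto simp: sym_def irrefl_def)
  then have "lam V E V \<in> A" unfolding A_def by force
  then have "Min A \<in> A" "Inf A = Min A" using finA Min_in cInf_eq_Min by blast+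
  moreover have "Inf A \<le> w" using assms(2) unfolding lambda_tw_def A_def by simp
  ultimately obtain N ET B where td: "tree_decomposition V E N ET B"
    and "Max ((\<lambda>t. lam V E (B t)) ` N) \<le> w" unfolding A_def by auto
  moreover have "finite N" using is_treeD(1)[OF tree_decomposition_is_tree[OF td]] .
  ultimately have "\<forall>t\<in>N. lam V E (B t) \<le> w" by (meson Max_ge dual_order.trans finite_imageI imageI)
  with td show thesis using that by blast
qed

theorem mainTheorem19:
  fixes lam :: "'a width_measure" and k :: int and V :: "'a set" and E :: "'a set set"
    and W :: "'a set"
  assumes "well_behaved lam"
    and "hypergraph V E"
    and "lambda_tw lam V E \<le> real_of_int k"
    and "W \<subseteq> V"
  shows "\<exists>S \<subseteq> V. lam V E S \<le> real_of_int k \<and>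
           (\<forall>C \<in> gaifman_components V E S. lam V E (W \<inter> C) \<le> lam V E W / 2)"
proof (rule ccontr)
  assume unbalanced: "\<not> ?thesis"
  obtain N ET B where td: "tree_decomposition V E N ET B"
    and width: "\<forall>t\<in>N. lam V E (B t) \<le> real_of_int k"
    using lambda_tw_attained[OF assms(2,3)] by blast
  have "\<forall>t\<in>N. \<exists>s C. (t, s) \<in> ET \<and> C \<in> gaifman_components V E (B t) \<and>
      lam V E (W \<inter> C) > lam V E W / 2 \<and> confined_to N B C (branch N ET t s)"
  proof
    fix t assume t: "t \<in> N"
    then obtain C where "C \<in> gaifman_components V E (B t)" "lam V E (W \<inter> C) > lam V E W / 2"
      using unbalanced width tree_decomposition_bag_subset[OF td] by force
    then show "\<exists>s C. (t, s) \<in> ET \<and> C \<in> gaifman_components V E (B t) \<and>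
        lam V E (W \<inter> C) > lam V E W / 2 \<and> confined_to N B C (branch N ET t s)"
      using component_confined_to_branch[OF td _ t] by metis
  qed
  then obtain f heavy where pointer: "\<forall>t\<in>N. (t, f t) \<in> ET \<and>
      heavy t \<in> gaifman_components V E (B t) \<and> lam V E (W \<inter> heavy t) > lam V E W / 2 \<and>
      confined_to N B (heavy t) (branch N ET t (f t))"
    by metis
  then obtain t where t: "t \<in> N" "f (f t) = t"
    using tree_choice_mutual_neighbours[OF tree_decomposition_is_tree[OF td]] by blast
  have "f t \<in> N" using pointer t(1) is_treeD(3)[OF tree_decomposition_is_tree[OF td]] by blast
  then have "heavy t \<inter> heavy (f t) = {}" "\<forall>u\<in>heavy t. \<forall>v\<in>heavy (f t). \<not> gaifman_adj E u v"
    using components_across_edge_separated[OF td, of t "f t"] pointer t by metis+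
  then have "lam V E (W \<inter> heavy t) + lam V E (W \<inter> heavy (f t)) \<le> lam V E W"
    using separated_parts_weight[OF assms(1,2,4)] by blast
  moreover have "lam V E (W \<inter> heavy t) > lam V E W / 2" "lam V E (W \<inter> heavy (f t)) > lam V E W / 2"
    using pointer t(1) \<open>f t \<in> N\<close> by blast+
  ultimately show False by linarith
qed

end
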